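(* Consider a one-site PTM cascade with $n\ge1$ layers, with all rate constants and the total amounts $\overline{F}_i,\overline{S}_i$ ($i=1,\dots,n$) positive and fixed. Let $r(s)=f_0(s)+f_1^Y(s)$, written in reduced form $r=r_1/r_2$ with $r_1,r_2\in\mathbb{R}[s]$ (these depend only on the rate constants and on $\overline{F}_i,\overline{S}_i$, not on $\overline{E}$). Let $\sigma_n=\beta_0$ be the smallest positive real zero of $r_2$. Then $r$ is continuous and strictly increasing on $[0,\sigma_n)$, with $r(0)=0$ and $r(s)\to+\infty$ as $s\to\sigma_n^-$, and for every $\overline{E}>0$ the BMSS value of $S_n^1$ is the unique $s\in[0,\sigma_n)$ with $r(s)=\overline{E}$. Thus the stimulus-response map $\overline{E}\mapsto S_n^1$ is the inverse of $r|_{[0,\sigma_n)}$.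
   Context: A one-site PTM cascade with $n$ layers has species $E=S_0^1$ and, for $i=1,\dots,n$, $S_i^0,S_i^1,F_i,Y_i^0,Y_i^1$, with reactions $S_{i-1}^1+S_i^0 \rightleftharpoons Y_i^0 \to S_{i-1}^1+S_i^1$ (rate constants $a_i^0,b_i^0,c_i^0$) and $F_i+S_i^1\rightleftharpoons Y_i^1\to F_i+S_i^0$ (rate constants $a_i^1,b_i^1,c_i^1$), all positive, mass-action kinetics. Put $\delta_i=a_i^1/(b_i^1+c_i^1)$, $\gamma_i=(c_i^1/c_i^0)\delta_i$, $\lambda_i=\frac{b_i^0+c_i^0}{a_i^0}\gamma_i$. Given total amounts $\overline{E},\overline{F}_i,\overline{S}_i$, a steady state is a real solution of: $Y_i^0=\gamma_iF_iS_i^1$, $Y_i^1=\delta_iF_iS_i^1$, $\lambda_iF_iS_i^1=S_i^0S_{i-1}^1$, $\overline{F}_i=F_i+Y_i^1$, $\overline{S}_i=S_i^0+S_i^1+Y_i^0+Y_i^1+Y_{i+1}^0$ ($i=1,\dots,n$, $Y_{n+1}^0:=0$), $\overline{E}=E+Y_1^0$. A BMSS is a steady state with positive total amounts and all concentrations nonnegative. Define $d_i(x,y)=(\overline{S}_i-y)-x-\overline{F}_i(\delta_i+\gamma_i)x+\delta_i(\overline{S}_i-y)x-\delta_ix^2$ and $g_i^Y(x)=\frac{\gamma_i\overline{F}_ix}{1+\delta_ix}$; define rational functions of $s$ recursively by $f_n(s)=s$, $f_{n+1}^Y(s)=0$, and for $i=n,\dots,1$: $f_i^Y(s)=g_i^Y(f_i(s))$,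 $f_{i-1}(s)=\frac{\lambda_i\overline{F}_if_i(s)}{d_i(f_i(s),f_{i+1}^Y(s))}$. $\beta_0$ denotes the smallest positive singularity of $f_0$. *)

theory Defs
  imports "HOL-Analysis.Analysis" "HOL-Computational_Algebra.Computational_Algebra"
    "HOL-Computational_Algebra.Normalized_Fraction" "HOL-Computational_Algebra.Field_as_Ring"
begin

text \<open>Rate constants and totals are indexed
  by the layer i (meaningful for i = 1..n):
  a0 i = a_i^0, b0 i = b_i^0, c0 i = c_i^0, a1 i = a_i^1, b1 i = b_i^1, c1 i = c_i^1,
  Fb i = total F_i, Sb i = total S_i.\<close>

definition delta :: "(nat \<Rightarrow> real) \<Rightarrow> (nat \<Rightarrow> real) \<Rightarrow> (nat \<Rightarrow> real) \<Rightarrow> nat \<Rightarrow> real" where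
  "delta a1 b1 c1 i = a1 i / (b1 i + c1 i)"

definition gamma :: "(nat \<Rightarrow> real) \<Rightarrow> (nat \<Rightarrow> real) \<Rightarrow> (nat \<Rightarrow> real) \<Rightarrow> (nat \<Rightarrow> real) \<Rightarrow> nat \<Rightarrow> real" where
  "gamma c0 a1 b1 c1 i = (c1 i / c0 i) * delta a1 b1 c1 i"

definition lambda :: "(nat \<Rightarrow> real) \<Rightarrow> (nat \<Rightarrow> real) \<Rightarrow> (nat \<Rightarrow> real) \<Rightarrow> (nat \<Rightarrow> real) \<Rightarrow> (nat \<Rightarrow> real) \<Rightarrow> (nat \<Rightarrow> real) \<Rightarrow> nat \<Rightarrow> real" where
  "lambda a0 b0 c0 a1 b1 c1 i = ((b0 i + c0 i) / a0 i) * gamma c0 a1 b1 c1 i"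

type_synonym ratfun = "real poly fract"

definition rconst :: "real \<Rightarrow> ratfun" where
  "rconst c = Fract [:c:] 1"

definition rvar :: ratfun where
  "rvar = Fract [:0, 1:] 1"

text \<open>d_i(x,y) and g_i^Y(x) over rational functions, with delta_i = dl, gamma_i = gm.\<close>
definition dfun :: "real \<Rightarrow> real \<Rightarrow> real \<Rightarrow> real \<Rightarrow> ratfun \<Rightarrow> ratfun \<Rightarrow> ratfun" where
  "dfun Sbi Fbi dl gm x y =
     (rconst Sbi - y) - x - rconst Fbi * (rconst dl + rconst gm) * x
     + rconst dl * (rconst Sbi - y) * x - rconst dl * x ^ 2"

definition gYfun :: "real \<Rightarrow> real \<Rightarrow> real \<Rightarrow> ratfun \<Rightarrow> ratfun" where
  "gYfun Fbi dl gm x = rconst gm * rconst Fbi * x / (1 + rconst dl * x)"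

text \<open>fpair ... k = (f_{n-k}, f_{n-k+1}^Y), computed by the backward recursion
  f_n = s, f_{n+1}^Y = 0, f_i^Y = g_i^Y(f_i), f_{i-1} = lambda_i Fb_i f_i / d_i(f_i, f_{i+1}^Y).\<close>
fun fpair :: "nat \<Rightarrow> (nat \<Rightarrow> real) \<Rightarrow> (nat \<Rightarrow> real) \<Rightarrow> (nat \<Rightarrow> real) \<Rightarrow> (nat \<Rightarrow> real) \<Rightarrow> (nat \<Rightarrow> real)
     \<Rightarrow> (nat \<Rightarrow> real) \<Rightarrow> (nat \<Rightarrow> real) \<Rightarrow> (nat \<Rightarrow> real) \<Rightarrow> nat \<Rightarrow> ratfun \<times> ratfun" where
  "fpair n a0 b0 c0 a1 b1 c1 Fb Sb 0 = (rvar, 0)"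
| "fpair n a0 b0 c0 a1 b1 c1 Fb Sb (Suc k) =
     (let i = n - k; (x, yY) = fpair n a0 b0 c0 a1 b1 c1 Fb Sb k;
          dl = delta a1 b1 c1 i; gm = gamma c0 a1 b1 c1 i; lm = lambda a0 b0 c0 a1 b1 c1 i
      in (rconst lm * rconst (Fb i) * x / dfun (Sb i) (Fb i) dl gm x yY,
          gYfun (Fb i) dl gm x))"

definition f0 :: "nat \<Rightarrow> (nat \<Rightarrow> real) \<Rightarrow> (nat \<Rightarrow> real) \<Rightarrow> (nat \<Rightarrow> real) \<Rightarrow> (nat \<Rightarrow> real) \<Rightarrow> (nat \<Rightarrow> real)
     \<Rightarrow> (nat \<Rightarrow> real) \<Rightarrow> (nat \<Rightarrow> real) \<Rightarrow> (nat \<Rightarrow> real) \<Rightarrow> ratfun" where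
  "f0 n a0 b0 c0 a1 b1 c1 Fb Sb = fst (fpair n a0 b0 c0 a1 b1 c1 Fb Sb n)"

definition rfun :: "nat \<Rightarrow> (nat \<Rightarrow> real) \<Rightarrow> (nat \<Rightarrow> real) \<Rightarrow> (nat \<Rightarrow> real) \<Rightarrow> (nat \<Rightarrow> real) \<Rightarrow> (nat \<Rightarrow> real)
     \<Rightarrow> (nat \<Rightarrow> real) \<Rightarrow> (nat \<Rightarrow> real) \<Rightarrow> (nat \<Rightarrow> real) \<Rightarrow> ratfun" where
  "rfun n a0 b0 c0 a1 b1 c1 Fb Sb =
     fst (fpair n a0 b0 c0 a1 b1 c1 Fb Sb n) + snd (fpair n a0 b0 c0 a1 b1 c1 Fb Sb n)"

definition rnum :: "ratfun \<Rightarrow> real poly" where "rnum q = fst (quot_of_fract q)"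
definition rden :: "ratfun \<Rightarrow> real poly" where "rden q = snd (quot_of_fract q)"
definition reval :: "ratfun \<Rightarrow> real \<Rightarrow> real" where
  "reval q s = poly (rnum q) s / poly (rden q) s"

definition smallest_pos_zero :: "real poly \<Rightarrow> real \<Rightarrow> bool" where
  "smallest_pos_zero p \<sigma> \<longleftrightarrow> \<sigma> > 0 \<and> poly p \<sigma> = 0 \<and> (\<forall>t. 0 < t \<and> t < \<sigma> \<longrightarrow> poly p t \<noteq> 0)"

text \<open>Steady state / BMSS. Concentrations: S0 i = S_i^0, S1 i = S_i^1 (with S1 0 = E = S_0^1),
  F i = F_i, Y0 i = Y_i^0, Y1 i = Y_i^1 for i = 1..n; Y_{n+1}^0 := 0.\<close>
definition steady_state :: "nat \<Rightarrow> (nat \<Rightarrow> real) \<Rightarrow> (nat \<Rightarrow> real) \<Rightarrow> (nat \<Rightarrow> real) \<Rightarrow> (nat \<Rightarrow> real) \<Rightarrow> (nat \<Rightarrow> real)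
     \<Rightarrow> (nat \<Rightarrow> real) \<Rightarrow> (nat \<Rightarrow> real) \<Rightarrow> (nat \<Rightarrow> real) \<Rightarrow> real
     \<Rightarrow> (nat \<Rightarrow> real) \<Rightarrow> (nat \<Rightarrow> real) \<Rightarrow> (nat \<Rightarrow> real) \<Rightarrow> (nat \<Rightarrow> real) \<Rightarrow> (nat \<Rightarrow> real) \<Rightarrow> bool" where
  "steady_state n a0 b0 c0 a1 b1 c1 Fb Sb Eb S0 S1 F Y0 Y1 \<longleftrightarrow>
     (\<forall>i\<in>{1..n}.
        Y0 i = gamma c0 a1 b1 c1 i * F i * S1 i \<and>
        Y1 i = delta a1 b1 c1 i * F i * S1 i \<and>
        lambda a0 b0 c0 a1 b1 c1 i * F i * S1 i = S0 i * S1 (i - 1) \<and>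
        Fb i = F i + Y1 i \<and>
        Sb i = S0 i + S1 i + Y0 i + Y1 i + (if i < n then Y0 (Suc i) else 0)) \<and>
     Eb = S1 0 + Y0 1"

definition BMSS :: "nat \<Rightarrow> (nat \<Rightarrow> real) \<Rightarrow> (nat \<Rightarrow> real) \<Rightarrow> (nat \<Rightarrow> real) \<Rightarrow> (nat \<Rightarrow> real) \<Rightarrow> (nat \<Rightarrow> real)
     \<Rightarrow> (nat \<Rightarrow> real) \<Rightarrow> (nat \<Rightarrow> real) \<Rightarrow> (nat \<Rightarrow> real) \<Rightarrow> real
     \<Rightarrow> (nat \<Rightarrow> real) \<Rightarrow> (nat \<Rightarrow> real) \<Rightarrow> (nat \<Rightarrow> real) \<Rightarrow> (nat \<Rightarrow> real) \<Rightarrow> (nat \<Rightarrow> real) \<Rightarrow> bool" where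
  "BMSS n a0 b0 c0 a1 b1 c1 Fb Sb Eb S0 S1 F Y0 Y1 \<longleftrightarrow>
     steady_state n a0 b0 c0 a1 b1 c1 Fb Sb Eb S0 S1 F Y0 Y1 \<and>
     Eb > 0 \<and> (\<forall>i\<in>{1..n}. Fb i > 0 \<and> Sb i > 0) \<and>
     S1 0 \<ge> 0 \<and>
     (\<forall>i\<in>{1..n}. S0 i \<ge> 0 \<and> S1 i \<ge> 0 \<and> F i \<ge> 0 \<and> Y0 i \<ge> 0 \<and> Y1 i \<ge> 0)"

end

theory Submission
  imports Defs
begin

text \<open>
  Write s = S_n^1. Moving upstream from the last layer, the recursion defining f_i and
  f_{i+1}^Y has a real-valued counterpart X k = f_{n-k}, Y k = f_{n-k+1}^Y, where, in terms of the free substrate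
  S_i^0 = Sb_i - y - x - Fb_i (\<delta>_i + \<gamma>_i) x/(1+\<delta>_i x), the next substrate is
  \<lambda>_i Fb_i x/(1+\<delta>_i x) / S_i^0. The key invariant (layer_profile) is that X k is a continuous,
  strictly increasing, unbounded function vanishing at 0 and Y k a continuous monotone one, on an
  initial segment of [0,\<infinity>) on which all free substrates so far are positive. One step upstream
  (layer_step) preserves it: the free substrate is strictly decreasing, so it is positive
  exactly on some [0,b), and the next substrate blows up at b.
\<close>

section \<open>Evaluating rational functions\<close>

definition defined_at :: "ratfun \<Rightarrow> real \<Rightarrow> bool" where
  "defined_at q t \<longleftrightarrow> poly (rden q) t \<noteq> 0"

text \<open>Any representative a/b with b(t) \<noteq> 0 may be used to evaluate a rational function:
  the reduced denominator divides b, so it does not vanish at t either.\<close>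
lemma reval_Fract:
  assumes "b \<noteq> 0" "poly b t \<noteq> 0"
  shows "defined_at (Fract a b) t \<and> reval (Fract a b) t = poly a t / poly b t"
proof -
  obtain p q where pq: "quot_of_fract (Fract a b) = (p, q)"
    by (cases "quot_of_fract (Fract a b)")
  have q0: "q \<noteq> 0" using snd_quot_of_fract_nonzero[of "Fract a b"] pq by simp
  have "Fract p q = Fract a b" using Fract_quot_of_fract[of "Fract a b"] pq by simp
  hence cross: "p * b = a * q" using eq_fract(1)[OF q0 assms(1)] by simp
  have "coprime p q" using coprime_quot_of_fract[of "Fract a b"] pq by simp
  moreover have "q dvd p * b" using cross by simp
  ultimately have "q dvd b" by (simp add: coprime_dvd_mult_right_iff coprime_commute)
  hence qt: "poly q t \<noteq> 0" using assms(2) by (auto elim: dvdE)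
  have "poly p t * poly b t = poly a t * poly q t" using arg_cong[OF cross, of "\<lambda>r. poly r t"] by simp
  hence "poly p t / poly q t = poly a t / poly b t" using qt assms(2) by (simp add: field_simps)
  thus ?thesis using qt pq by (simp add: defined_at_def reval_def rden_def rnum_def)
qed

lemma Fract_rnum_rden: "rden q \<noteq> 0" "q = Fract (rnum q) (rden q)"
  by (simp_all add: rden_def rnum_def)

lemma eval_add:
  assumes "defined_at x t" "defined_at y t"
  shows "defined_at (x + y) t \<and> reval (x + y) t = reval x t + reval y t"
proof -
  have "x + y = Fract (rnum x * rden y + rnum y * rden x) (rden x * rden y)"
    by (metis add_fract Fract_rnum_rden)
  moreover have "reval x t + reval y t =
      poly (rnum x * rden y + rnum y * rden x) t / poly (rden x * rden y) t"
    using assms unfolding reval_def defined_at_def poly_mult poly_add by (rule add_frac_eq)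
  ultimately show ?thesis
    using reval_Fract[of "rden x * rden y" t] assms by (simp add: Fract_rnum_rden defined_at_def)
qed

lemma eval_diff:
  assumes "defined_at x t" "defined_at y t"
  shows "defined_at (x - y) t \<and> reval (x - y) t = reval x t - reval y t"
proof -
  have "x - y = Fract (rnum x * rden y - rnum y * rden x) (rden x * rden y)"
    by (metis diff_fract Fract_rnum_rden)
  moreover have "reval x t - reval y t =
      poly (rnum x * rden y - rnum y * rden x) t / poly (rden x * rden y) t"
    using assms unfolding reval_def defined_at_def poly_mult poly_diff by (rule diff_frac_eq)
  ultimately show ?thesis
    using reval_Fract[of "rden x * rden y" t] assms by (simp add: Fract_rnum_rden defined_at_def)
qed

lemma eval_mult:
  assumes "defined_at x t" "defined_at y t"
  shows "defined_at (x * y) t \<and> reval (x * y) t = reval x t * reval y t"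
proof -
  have "x * y = Fract (rnum x * rnum y) (rden x * rden y)"
    by (metis mult_fract Fract_rnum_rden)
  moreover have "reval x t * reval y t = poly (rnum x * rnum y) t / poly (rden x * rden y) t"
    unfolding reval_def poly_mult by (rule times_divide_times_eq)
  ultimately show ?thesis
    using reval_Fract[of "rden x * rden y" t] assms by (simp add: Fract_rnum_rden defined_at_def)
qed

lemma eval_divide:
  assumes "defined_at x t" "defined_at y t" "reval y t \<noteq> 0"
  shows "defined_at (x / y) t \<and> reval (x / y) t = reval x t / reval y t"
proof -
  have ny: "poly (rnum y) t \<noteq> 0" using assms(3) by (simp add: reval_def)
  hence den: "rden x * rnum y \<noteq> 0" "poly (rden x * rnum y) t \<noteq> 0"
    using assms(1) Fract_rnum_rden(1)[of x] by (auto simp: defined_at_def)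
  have "x / y = Fract (rnum x * rden y) (rden x * rnum y)"
    by (metis divide_fract Fract_rnum_rden)
  moreover have "reval x t / reval y t = poly (rnum x * rden y) t / poly (rden x * rnum y) t"
    using assms ny unfolding reval_def poly_mult defined_at_def by (simp add: divide_divide_times_eq)
  ultimately show ?thesis using reval_Fract[OF den, of "rnum x * rden y"] by simp
qed

lemma eval_const: "defined_at (rconst c) t \<and> reval (rconst c) t = c"
  using reval_Fract[of 1 t "[:c:]"] by (simp add: rconst_def)

lemma eval_var: "defined_at rvar t \<and> reval rvar t = t"
  using reval_Fract[of 1 t "[:0, 1:]"] by (simp add: rvar_def)

lemma eval_one: "defined_at 1 t \<and> reval 1 t = 1"
  using eval_const[of 1 t] by (simp add: rconst_def One_fract_def one_pCons)

lemma eval_zero: "defined_at 0 t \<and> reval 0 t = 0"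
  using eval_const[of 0 t] by (simp add: rconst_def Zero_fract_def)

lemmas defined_at_intros[simp] = eval_add[THEN conjunct1] eval_diff[THEN conjunct1]
  eval_mult[THEN conjunct1] eval_const[THEN conjunct1] eval_var[THEN conjunct1]
  eval_one[THEN conjunct1] eval_zero[THEN conjunct1]
lemmas reval_simps[simp] = eval_add[THEN conjunct2] eval_diff[THEN conjunct2]
  eval_mult[THEN conjunct2] eval_const[THEN conjunct2] eval_var[THEN conjunct2]
  eval_one[THEN conjunct2] eval_zero[THEN conjunct2]

lemma isCont_reval: "defined_at q t \<Longrightarrow> isCont (reval q) t"
  unfolding reval_def defined_at_def by (auto intro!: continuous_intros)

lemma pole_at_blow_up:
  assumes "filterlim (reval q) at_top (at_left \<sigma>)"
  shows "poly (rden q) \<sigma> = 0"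
proof (rule ccontr)
  assume "poly (rden q) \<sigma> \<noteq> 0"
  hence "(reval q \<longlongrightarrow> reval q \<sigma>) (at_left \<sigma>)"
    using isCont_reval[of q \<sigma>] unfolding defined_at_def isCont_def
    by (blast intro: tendsto_mono[OF at_le[OF subset_UNIV]])
  thus False
    using not_tendsto_and_filterlim_at_infinity[of "at_left \<sigma>" "reval q" "reval q \<sigma>"]
      filterlim_at_top_imp_at_infinity[OF assms] trivial_limit_at_left_real by blast
qed

lemma smallest_pos_zero_rden:
  assumes "0 < \<sigma>" "\<And>t. 0 < t \<Longrightarrow> t < \<sigma> \<Longrightarrow> defined_at q t"
    and "filterlim (reval q) at_top (at_left \<sigma>)"
  shows "smallest_pos_zero (rden q) \<sigma>"
  using assms pole_at_blow_up[OF assms(3)] by (auto simp: smallest_pos_zero_def defined_at_def)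

section \<open>Increasing responses on initial segments of the half line\<close>

text \<open>All concentrations in a layer are functions of s = S_n^1 \<ge> 0, defined on an initial
  segment of [0,\<infinity>): either the whole half line or [0,b).\<close>
definition initial_segment :: "real set \<Rightarrow> bool" where
  "initial_segment D \<longleftrightarrow> 0 \<in> D \<and> D \<subseteq> {0..} \<and> (\<forall>t\<in>D. {0..t} \<subseteq> D)"

definition increasing_response :: "real set \<Rightarrow> (real \<Rightarrow> real) \<Rightarrow> bool" where
  "increasing_response D f \<longleftrightarrow>
     continuous_on D f \<and> strict_mono_on D f \<and> f 0 = 0 \<and> (\<forall>M. \<exists>s\<in>D. M < f s)"

text \<open>The invariant propagated upstream through the cascade: the substrate X = f_i of a layer is an
  increasing response and the complex Y = f_{i+1}^Y is continuous, monotone and vanishes at 0.\<close>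
definition layer_profile :: "real set \<Rightarrow> (real \<Rightarrow> real) \<Rightarrow> (real \<Rightarrow> real) \<Rightarrow> bool" where
  "layer_profile D X Y \<longleftrightarrow> initial_segment D \<and> increasing_response D X \<and>
     continuous_on D Y \<and> mono_on D Y \<and> Y 0 = 0"

lemma initial_segment_atLeast: "initial_segment {0..}"
  by (auto simp: initial_segment_def)

lemma initial_segment_atLeastLessThan: "0 < b \<Longrightarrow> initial_segment {0..<b}"
  by (auto simp: initial_segment_def)

lemma increasing_response_nonneg:
  assumes "initial_segment D" "increasing_response D f" "s \<in> D"
  shows "0 \<le> f s" and "f s = 0 \<Longrightarrow> s = 0"
proof -
  have "0 \<in> D" "0 \<le> s" using assms by (auto simp: initial_segment_def)
  hence "f 0 < f s" if "s \<noteq> 0"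
    using that assms(2,3) strict_mono_onD[of D f 0 s] by (simp add: increasing_response_def)
  thus "0 \<le> f s" and "f s = 0 \<Longrightarrow> s = 0"
    using assms(2) by (cases "s = 0"; force simp: increasing_response_def)+
qed

lemma layer_profile_nonneg:
  assumes "layer_profile D X Y" "s \<in> D"
  shows "0 \<le> s" "0 \<le> X s" "0 \<le> Y s"
proof -
  have D: "initial_segment D" "0 \<in> D" and Y: "mono_on D Y" "Y 0 = 0"
    using assms(1) by (auto simp: layer_profile_def initial_segment_def)
  show "0 \<le> s" using D assms(2) by (auto simp: initial_segment_def)
  show "0 \<le> X s" using assms increasing_response_nonneg(1)[OF D(1)]
    by (auto simp: layer_profile_def)
  show "0 \<le> Y s" using mono_onD[OF Y(1) D(2) assms(2)] \<open>0 \<le> s\<close> Y(2) by simp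
qed

lemma layer_profile_total_response:
  assumes "layer_profile D X Y"
  shows "increasing_response D (\<lambda>s. X s + Y s)"
proof -
  have X: "increasing_response D X" and Y: "continuous_on D Y" "mono_on D Y" "Y 0 = 0"
    using assms by (auto simp: layer_profile_def)
  have "strict_mono_on D (\<lambda>s. X s + Y s)"
  proof (rule strict_mono_onI)
    fix r s assume "r \<in> D" "s \<in> D" "r < s"
    thus "X r + Y r < X s + Y s"
      using X mono_onD[OF Y(2), of r s] strict_mono_onD[of D X r s]
      by (simp add: increasing_response_def add_less_le_mono)
  qed
  moreover have "\<exists>s\<in>D. M < X s + Y s" for M
  proof -
    obtain s where "s \<in> D" "M < X s" using X unfolding increasing_response_def by blast
    thus ?thesis using layer_profile_nonneg(3)[OF assms] by (intro bexI[of _ s]) force+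
  qed
  ultimately show ?thesis
    using X Y by (auto simp: increasing_response_def intro!: continuous_intros)
qed

lemma increasing_response_cong:
  assumes "0 \<in> D" "\<And>s. s \<in> D \<Longrightarrow> f s = g s" "increasing_response D f"
  shows "increasing_response D g"
proof -
  have "strict_mono_on D g"
    using assms(3) by (auto simp: increasing_response_def assms(2) intro!: strict_mono_onI
        dest: strict_mono_onD)
  thus ?thesis using assms continuous_on_cong[of D D f g]
    by (auto simp: increasing_response_def)
qed

lemma increasing_response_tendsto:
  assumes "0 < \<sigma>" "increasing_response {0..<\<sigma>} f"
  shows "filterlim f at_top (at_left \<sigma>)"
  unfolding filterlim_at_top
proof
  fix Z
  obtain s0 where s0: "s0 \<in> {0..<\<sigma>}" "Z < f s0"
    using assms(2) unfolding increasing_response_def by blast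
  have "eventually (\<lambda>x. x \<in> {s0<..<\<sigma>}) (at_left \<sigma>)"
    using s0 by (intro eventually_at_left_real) auto
  thus "eventually (\<lambda>x. Z \<le> f x) (at_left \<sigma>)"
  proof (rule eventually_mono)
    fix x assume "x \<in> {s0<..<\<sigma>}"
    hence "f s0 < f x" using s0 assms(2) by (auto simp: increasing_response_def
          intro: strict_mono_onD)
    thus "Z \<le> f x" using s0 by simp
  qed
qed

lemma increasing_response_inverse:
  assumes "increasing_response {0..<\<sigma>} f" "0 < E"
  shows "\<exists>s. 0 \<le> s \<and> s < \<sigma> \<and> f s = E \<and> (\<forall>t. 0 \<le> t \<and> t < \<sigma> \<and> f t = E \<longrightarrow> t = s)"
proof -
  have f: "continuous_on {0..<\<sigma>} f" "strict_mono_on {0..<\<sigma>} f" "f 0 = 0"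
    using assms(1) by (auto simp: increasing_response_def)
  obtain s1 where s1: "s1 \<in> {0..<\<sigma>}" "E < f s1"
    using assms(1) unfolding increasing_response_def by blast
  obtain s where s: "0 \<le> s" "s \<le> s1" "f s = E"
    using IVT'[of f 0 E s1] s1 f assms(2) by (force intro: continuous_on_subset[OF f(1)])
  have "t = s" if "t \<in> {0..<\<sigma>}" "f t = E" for t
    using that s s1 strict_mono_onD[OF f(2), of t s] strict_mono_onD[OF f(2), of s t]
    by (cases t s rule: linorder_cases) auto
  thus ?thesis using s s1 by (intro exI[of _ s]) auto
qed

lemma positive_region_initial_interval:
  fixes R :: "real \<Rightarrow> real"
  assumes D: "initial_segment D" and cont: "continuous_on D R"
    and dec: "\<And>s t. s \<in> D \<Longrightarrow> t \<in> D \<Longrightarrow> s < t \<Longrightarrow> R t < R s"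
    and start: "0 < R 0" and s1: "s1 \<in> D" "R s1 < 0"
  obtains b where "0 < b" "b \<in> D" "R b = 0" "{s \<in> D. 0 < R s} = {0..<b}"
proof -
  have sub1: "{0..s1} \<subseteq> D" and "0 \<le> s1" using D s1 by (auto simp: initial_segment_def)
  then obtain b where b: "0 \<le> b" "b \<le> s1" "R b = 0"
    using IVT2'[of R s1 0 0] continuous_on_subset[OF cont sub1] start s1(2) by auto
  have bD: "b \<in> D" and sub: "{0..b} \<subseteq> D" using sub1 b D by (auto simp: initial_segment_def)
  have "0 < b" using b start by (cases "b = 0") auto
  have "{s \<in> D. 0 < R s} = {0..<b}"
  proof (intro equalityI subsetI)
    fix s assume s: "s \<in> {s \<in> D. 0 < R s}"
    hence "0 \<le> s" using D by (auto simp: initial_segment_def)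
    moreover have "\<not> b \<le> s" using s b(3) dec[OF bD, of s] by (cases "b = s") auto
    ultimately show "s \<in> {0..<b}" by simp
  next
    fix s assume s: "s \<in> {0..<b}"
    hence "s \<in> D" using sub by auto
    thus "s \<in> {s \<in> D. 0 < R s}" using dec[of s b] s bD b(3) by auto
  qed
  thus thesis using that \<open>0 < b\<close> bD b(3) by blast
qed

lemma quotient_tendsto_at_top:
  fixes N R :: "real \<Rightarrow> real"
  assumes "a < b" "continuous_on {a..b} R" "R b = 0" "\<And>s. s \<in> {a..<b} \<Longrightarrow> 0 < R s"
    and "0 < c" "\<And>s. s \<in> {a..<b} \<Longrightarrow> c \<le> N s"
  shows "filterlim (\<lambda>s. N s / R s) at_top (at_left b)"
proof -
  have near: "eventually (\<lambda>s. s \<in> {a..<b}) (at_left b)"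
    using eventually_at_left_real[OF assms(1)] by (rule eventually_mono) auto
  have "(R \<longlongrightarrow> R b) (at b within {a..b})"
    using assms(1,2) by (simp add: continuous_on_def)
  hence "(R \<longlongrightarrow> 0) (at_left b)"
    unfolding at_within_Icc_at_left[OF assms(1)] assms(3) .
  hence "filterlim R (at_right 0) (at_left b)"
    by (rule tendsto_imp_filterlim_at_right) (use near assms(4) in \<open>auto elim: eventually_mono\<close>)
  hence "filterlim (\<lambda>s. c * inverse (R s)) at_top (at_left b)"
    by (intro filterlim_tendsto_pos_mult_at_top[OF tendsto_const assms(5)]
        filterlim_compose[OF filterlim_inverse_at_top_right])
  moreover have "eventually (\<lambda>s. c * inverse (R s) \<le> N s / R s) (at_left b)"
  proof (rule eventually_mono[OF near])
    fix s assume s: "s \<in> {a..<b}"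
    have "c / R s \<le> N s / R s" using assms(4)[OF s] assms(6)[OF s] by (simp add: divide_right_mono)
    thus "c * inverse (R s) \<le> N s / R s" by (simp add: divide_inverse)
  qed
  ultimately show ?thesis by (rule filterlim_at_top_mono)
qed

lemma filterlim_at_left_exceeds:
  fixes f :: "real \<Rightarrow> real"
  assumes "filterlim f at_top (at_left b)" "a < b"
  shows "\<exists>s\<in>{a<..<b}. M < f s"
proof -
  have "eventually (\<lambda>s. M < f s \<and> s \<in> {a<..<b}) (at_left b)"
    using assms(1)[unfolded filterlim_at_top_dense, rule_format, of M]
      eventually_at_left_real[OF assms(2)] by (rule eventually_conj)
  thus ?thesis using eventually_happens'[OF trivial_limit_at_left_real] by blast
qed

text \<open>A nonnegative increasing numerator over a positive decreasing denominator vanishing at b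
  gives an increasing response on [0,b); this is how the next substrate arises.\<close>
lemma quotient_response:
  fixes h R :: "real \<Rightarrow> real"
  assumes b: "0 < b" and h: "continuous_on {0..b} h" "strict_mono_on {0..b} h" "h 0 = 0"
    and R: "continuous_on {0..b} R" "R b = 0"
      "\<And>s t. s \<in> {0..b} \<Longrightarrow> t \<in> {0..b} \<Longrightarrow> s < t \<Longrightarrow> R t < R s"
  shows "increasing_response {0..<b} (\<lambda>s. h s / R s)"
proof -
  have Rpos: "0 < R s" if "s \<in> {0..<b}" for s using R(2) R(3)[of s b] that b by auto
  have h_nonneg: "0 \<le> h s" if "s \<in> {0..b}" for s
    using strict_mono_on_leD[OF h(2), of 0 s] that h(3) b by auto
  have "continuous_on {0..<b} (\<lambda>s. h s / R s)"
  proof (intro continuous_intros)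
    show "continuous_on {0..<b} h" "continuous_on {0..<b} R"
      by (auto intro: continuous_on_subset[OF h(1)] continuous_on_subset[OF R(1)])
    show "\<forall>s\<in>{0..<b}. R s \<noteq> 0" using Rpos by (metis less_irrefl)
  qed
  moreover have "strict_mono_on {0..<b} (\<lambda>s. h s / R s)"
  proof (rule strict_mono_onI)
    fix r s assume rs: "r \<in> {0..<b}" "s \<in> {0..<b}" "r < s"
    thus "h r / R r < h s / R s"
      using h_nonneg[of r] strict_mono_onD[OF h(2), of r s] Rpos[of s] R(3)[of r s]
      by (intro frac_less) auto
  qed
  moreover have "\<exists>s\<in>{0..<b}. M < h s / R s" for M
  proof -
    have c: "0 < h (b / 2)" using strict_mono_onD[OF h(2), of 0 "b / 2"] h(3) b by simp
    have "h (b / 2) \<le> h s" if "s \<in> {b / 2..<b}" for s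
      using strict_mono_on_leD[OF h(2), of "b / 2" s] that b by auto
    hence "filterlim (\<lambda>s. h s / R s) at_top (at_left b)"
      using Rpos b R(2) c by (intro quotient_tendsto_at_top[where a = "b / 2" and c = "h (b / 2)"]
          continuous_on_subset[OF R(1)]) auto
    hence "\<exists>s\<in>{b / 2<..<b}. M < h s / R s" using b by (intro filterlim_at_left_exceeds) auto
    thus ?thesis by force
  qed
  ultimately show ?thesis using h(3) by (simp add: increasing_response_def)
qed

section \<open>One layer of the cascade\<close>

text \<open>Eliminating F_i and the complexes from the layer equations leaves two real functions:
  the saturation x/(1+\<delta>x), giving F_i S_i^1 = Fb_i x/(1+\<delta>x), and the free substrate S_i^0
  in terms of x = S_i^1 and y = Y_{i+1}^0.\<close>
definition sat :: "real \<Rightarrow> real \<Rightarrow> real" where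
  "sat d x = x / (1 + d * x)"

definition free_substrate :: "real \<Rightarrow> real \<Rightarrow> real \<Rightarrow> real \<Rightarrow> real \<Rightarrow> real \<Rightarrow> real" where
  "free_substrate Sb Fb d g x y = Sb - y - x - Fb * (d + g) * sat d x"

lemma sat_zero[simp]: "sat d 0 = 0"
  by (simp add: sat_def)

lemma sat_nonneg: "0 < d \<Longrightarrow> 0 \<le> x \<Longrightarrow> 0 \<le> sat d x"
  by (simp add: sat_def)

lemma sat_strict_mono:
  assumes "0 < d" "0 \<le> x" "x < y"
  shows "sat d x < sat d y"
proof -
  have "0 < 1 + d * x" "0 < 1 + d * y" using assms by (auto intro: add_pos_nonneg)
  moreover have "x * (1 + d * y) < y * (1 + d * x)" using assms by (simp add: algebra_simps)
  ultimately show ?thesis by (simp add: sat_def divide_simps)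
qed

lemma saturated_response:
  assumes "layer_profile D X Y" "0 < d"
  shows "continuous_on D (\<lambda>s. sat d (X s))" "strict_mono_on D (\<lambda>s. sat d (X s))"
proof -
  have X: "increasing_response D X" using assms(1) by (simp add: layer_profile_def)
  note nonneg = layer_profile_nonneg[OF assms(1)]
  have "\<forall>s\<in>D. 0 < 1 + d * X s" using nonneg(2) assms(2) by (simp add: add_pos_nonneg)
  hence "\<forall>s\<in>D. 1 + d * X s \<noteq> 0" by (metis less_irrefl)
  moreover have "continuous_on D X" using X by (simp add: increasing_response_def)
  ultimately show "continuous_on D (\<lambda>s. sat d (X s))"
    unfolding sat_def by (intro continuous_intros)
  show "strict_mono_on D (\<lambda>s. sat d (X s))"
    using X nonneg(2) sat_strict_mono[OF assms(2)]
    by (auto simp: increasing_response_def intro!: strict_mono_onI dest: strict_mono_onD)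
qed

lemma free_substrate_response:
  assumes prof: "layer_profile D X Y" and pos: "0 < Fb" "0 < d" "0 < g"
  shows "continuous_on D (\<lambda>s. free_substrate Sb Fb d g (X s) (Y s))"
    and "\<And>s t. s \<in> D \<Longrightarrow> t \<in> D \<Longrightarrow> s < t \<Longrightarrow>
           free_substrate Sb Fb d g (X t) (Y t) < free_substrate Sb Fb d g (X s) (Y s)"
    and "free_substrate Sb Fb d g (X 0) (Y 0) = Sb"
    and "\<And>s. s \<in> D \<Longrightarrow> free_substrate Sb Fb d g (X s) (Y s) \<le> Sb - X s"
proof -
  have X: "increasing_response D X" and Y: "continuous_on D Y" "mono_on D Y" "Y 0 = 0"
    using prof by (auto simp: layer_profile_def)
  note h = saturated_response[OF prof pos(2)]
  show "continuous_on D (\<lambda>s. free_substrate Sb Fb d g (X s) (Y s))"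
    unfolding free_substrate_def using X Y h(1)
    by (auto simp: increasing_response_def intro!: continuous_intros)
  show "free_substrate Sb Fb d g (X s) (Y s) \<le> Sb - X s" if "s \<in> D" for s
  proof -
    have "0 \<le> Fb * (d + g) * sat d (X s)"
      using layer_profile_nonneg(2)[OF prof that] sat_nonneg[OF pos(2)] pos by simp
    thus ?thesis using layer_profile_nonneg(3)[OF prof that] by (simp add: free_substrate_def)
  qed
  show "free_substrate Sb Fb d g (X 0) (Y 0) = Sb"
    using X Y by (simp add: free_substrate_def increasing_response_def)
  fix s t assume st: "s \<in> D" "t \<in> D" "s < t"
  have "X s < X t" using X st by (auto simp: increasing_response_def dest: strict_mono_onD)
  moreover have "Y s \<le> Y t" using mono_onD[OF Y(2) st(1,2)] st(3) by simp
  moreover have "Fb * (d + g) * sat d (X s) \<le> Fb * (d + g) * sat d (X t)"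
    using strict_mono_onD[OF h(2) st] pos by (intro mult_left_mono) auto
  ultimately show "free_substrate Sb Fb d g (X t) (Y t) < free_substrate Sb Fb d g (X s) (Y s)"
    by (simp add: free_substrate_def)
qed

text \<open>If layer i+1 has profile (X, Y) on D, then layer i is
  admissible (positive free substrate S_i^0) exactly on some [0,b), and there the next substrate
  S_{i-1}^1 = \<lambda> Fb x/(1+\<delta>x) / S_i^0 and the complex Y_i^0 = \<gamma> Fb x/(1+\<delta>x) again form a
  profile; the substrate blows up at b because S_i^0 tends to 0 there.\<close>
lemma layer_step:
  fixes X Y :: "real \<Rightarrow> real"
  assumes prof: "layer_profile D X Y" and pos: "0 < Sb" "0 < Fb" "0 < d" "0 < g" "0 < l"
  obtains b where "0 < b" "{s \<in> D. 0 < free_substrate Sb Fb d g (X s) (Y s)} = {0..<b}"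
    "layer_profile {0..<b} (\<lambda>s. l * Fb * sat d (X s) / free_substrate Sb Fb d g (X s) (Y s))
       (\<lambda>s. g * Fb * sat d (X s))"
proof -
  define R where "R s = free_substrate Sb Fb d g (X s) (Y s)" for s
  have D: "initial_segment D" and X: "increasing_response D X"
    using prof by (auto simp: layer_profile_def)
  note Rprops = free_substrate_response[OF prof pos(2-4), where Sb = Sb, folded R_def]
  note sat_props = saturated_response[OF prof pos(3)]
  obtain s1 where s1: "s1 \<in> D" "Sb < X s1" using X unfolding increasing_response_def by blast
  have start: "0 < R 0" and "R s1 < 0" using Rprops(3) Rprops(4)[OF s1(1)] s1 pos(1) by simp_all
  then obtain b where b: "0 < b" "b \<in> D" "R b = 0" and region: "{s \<in> D. 0 < R s} = {0..<b}"
    using positive_region_initial_interval[OF D Rprops(1,2) start s1(1)] by blast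
  have sub: "{0..b} \<subseteq> D" using D b(2) by (simp add: initial_segment_def)
  have h: "continuous_on {0..b} (\<lambda>s. l * Fb * sat d (X s))"
    "strict_mono_on {0..b} (\<lambda>s. l * Fb * sat d (X s))"
    using continuous_on_subset[OF sat_props(1) sub] monotone_on_subset[OF sat_props(2) sub] pos(2,5)
    by (auto intro!: continuous_intros strict_mono_onI dest: strict_mono_onD)
  have "increasing_response {0..<b} (\<lambda>s. l * Fb * sat d (X s) / R s)"
    using X sub b(1,3) h by (intro quotient_response continuous_on_subset[OF Rprops(1)] Rprops(2))
      (auto simp: increasing_response_def)
  moreover have "continuous_on {0..<b} (\<lambda>s. g * Fb * sat d (X s))"
    using sub by (intro continuous_intros continuous_on_subset[OF sat_props(1)]) auto
  moreover have "mono_on {0..<b} (\<lambda>s. g * Fb * sat d (X s))"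
  proof (rule mono_onI)
    fix r s assume "r \<in> {0..<b}" "s \<in> {0..<b}" "r \<le> s"
    moreover from this have "r \<in> D" "s \<in> D" using sub by auto
    ultimately show "g * Fb * sat d (X r) \<le> g * Fb * sat d (X s)"
      using strict_mono_on_leD[OF sat_props(2)] pos by (simp add: mult_left_mono)
  qed
  ultimately have "layer_profile {0..<b} (\<lambda>s. l * Fb * sat d (X s) / R s) (\<lambda>s. g * Fb * sat d (X s))"
    using X b(1) by (simp add: layer_profile_def increasing_response_def
        initial_segment_atLeastLessThan)
  thus thesis using that b(1) region by (simp add: R_def)
qed

lemma eval_dfun:
  assumes "defined_at x t" "defined_at y t" "1 + d * reval x t \<noteq> 0"
  shows "defined_at (dfun Sb Fb d g x y) t \<and> reval (dfun Sb Fb d g x y) t =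
           (1 + d * reval x t) * free_substrate Sb Fb d g (reval x t) (reval y t)"
  using assms by (simp add: dfun_def power2_eq_square free_substrate_def sat_def field_simps)

lemma eval_gYfun:
  assumes "defined_at x t" "1 + d * reval x t \<noteq> 0"
  shows "defined_at (gYfun Fb d g x) t \<and> reval (gYfun Fb d g x) t = g * Fb * sat d (reval x t)"
  using assms eval_divide[of "rconst g * rconst Fb * x" t "1 + rconst d * x"]
  by (simp add: gYfun_def sat_def)

lemma layer_closed_form:
  fixes d g x y F Fb Sb S0 Y0 Y1 :: real
  assumes "0 < d" "0 \<le> x" "Y0 = g * F * x" "Y1 = d * F * x" "Fb = F + Y1"
    and "Sb = S0 + x + Y0 + Y1 + y"
  shows "F = Fb / (1 + d * x)" "F * x = Fb * sat d x" "S0 = free_substrate Sb Fb d g x y"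
proof -
  have pos: "0 < 1 + d * x" using assms(1,2) by (simp add: add_pos_nonneg)
  have "Fb = F * (1 + d * x)" using assms(4,5) by (simp add: algebra_simps)
  thus F: "F = Fb / (1 + d * x)" using pos by (simp add: field_simps)
  thus Fx: "F * x = Fb * sat d x" by (simp add: sat_def)
  have "S0 = Sb - y - x - (d + g) * (F * x)" using assms(3-6) by (simp add: algebra_simps)
  thus "S0 = free_substrate Sb Fb d g x y" unfolding Fx by (simp add: free_substrate_def)
qed

section \<open>The cascade\<close>

locale cascade =
  fixes n :: nat and a0 b0 c0 a1 b1 c1 Fb Sb :: "nat \<Rightarrow> real"
  assumes n1: "n \<ge> 1"
    and rates: "\<forall>i\<in>{1..n}. a0 i > 0 \<and> b0 i > 0 \<and> c0 i > 0 \<and> a1 i > 0 \<and> b1 i > 0 \<and> c1 i > 0"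
    and tots: "\<forall>i\<in>{1..n}. Fb i > 0 \<and> Sb i > 0"
begin

abbreviation "dl i \<equiv> delta a1 b1 c1 i"
abbreviation "gm i \<equiv> gamma c0 a1 b1 c1 i"
abbreviation "lm i \<equiv> lambda a0 b0 c0 a1 b1 c1 i"
abbreviation "free i \<equiv> free_substrate (Sb i) (Fb i) (dl i) (gm i)"
abbreviation "FP k \<equiv> fpair n a0 b0 c0 a1 b1 c1 Fb Sb k"

lemma layer_params_pos:
  assumes "i \<in> {1..n}"
  shows "0 < dl i" "0 < gm i" "0 < lm i" "0 < Fb i" "0 < Sb i"
proof -
  have h: "a0 i > 0" "b0 i > 0" "c0 i > 0" "a1 i > 0" "b1 i > 0" "c1 i > 0" "Fb i > 0" "Sb i > 0"
    using rates tots assms by auto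
  thus "0 < dl i" "0 < gm i" "0 < Fb i" "0 < Sb i" by (simp_all add: delta_def gamma_def)
  show "0 < lm i" using h by (simp add: lambda_def gamma_def delta_def add_pos_pos)
qed

text \<open>The real-valued counterpart of the recursion defining f_i and f_{i+1}^Y: after k steps,
  X k = f_{n-k} and Y k = f_{n-k+1}^Y, written with the free substrate of layer n-k.\<close>
primrec upstream :: "nat \<Rightarrow> real \<Rightarrow> real \<times> real" where
  "upstream 0 s = (s, 0)"
| "upstream (Suc k) s =
     (let i = n - k; (x, y) = upstream k s
      in (lm i * Fb i * sat (dl i) x / free i x y, gm i * Fb i * sat (dl i) x))"

definition X :: "nat \<Rightarrow> real \<Rightarrow> real" where "X k s = fst (upstream k s)"
definition Y :: "nat \<Rightarrow> real \<Rightarrow> real" where "Y k s = snd (upstream k s)"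

lemma X_0: "X 0 = (\<lambda>s. s)" and Y_0: "Y 0 = (\<lambda>s. 0)"
  by (simp_all add: X_def Y_def fun_eq_iff)

lemma X_Suc: "X (Suc k) = (\<lambda>s. lm (n - k) * Fb (n - k) * sat (dl (n - k)) (X k s) /
                               free (n - k) (X k s) (Y k s))"
  and Y_Suc: "Y (Suc k) = (\<lambda>s. gm (n - k) * Fb (n - k) * sat (dl (n - k)) (X k s))"
  by (simp_all add: X_def Y_def fun_eq_iff Let_def split_beta)

primrec admissible :: "nat \<Rightarrow> real set" where
  "admissible 0 = {0..}"
| "admissible (Suc k) = {s \<in> admissible k. 0 < free (n - k) (X k s) (Y k s)}"

lemma admissible_antimono: "j \<le> k \<Longrightarrow> admissible k \<subseteq> admissible j"
  by (induction k) (auto simp: le_Suc_eq)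

lemma admissible_profile:
  "k \<le> n \<Longrightarrow> layer_profile (admissible k) (X k) (Y k) \<and> (0 < k \<longrightarrow> (\<exists>b>0. admissible k = {0..<b}))"
proof (induction k)
  case 0
  have "\<exists>s\<in>{0..}. M < s" for M :: real by (intro bexI[of _ "max M 0 + 1"]) auto
  thus ?case by (simp add: X_0 Y_0 layer_profile_def increasing_response_def
        initial_segment_atLeast strict_mono_onI mono_onI)
next
  case (Suc k)
  hence i: "n - k \<in> {1..n}" and prof: "layer_profile (admissible k) (X k) (Y k)" by auto
  note pos = layer_params_pos[OF i]
  obtain b where "0 < b" "admissible (Suc k) = {0..<b}"
    "layer_profile {0..<b} (X (Suc k)) (Y (Suc k))"
    using layer_step[OF prof pos(5,4,1,2,3)] unfolding X_Suc Y_Suc admissible.simps by blast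
  thus ?case by auto
qed

lemma upstream_eval:
  "k \<le> n \<Longrightarrow> s \<in> admissible k \<Longrightarrow>
     defined_at (fst (FP k)) s \<and> defined_at (snd (FP k)) s \<and>
     reval (fst (FP k)) s = X k s \<and> reval (snd (FP k)) s = Y k s"
proof (induction k)
  case 0 thus ?case by (simp add: X_0 Y_0)
next
  case (Suc k)
  define i where "i = n - k"
  have i: "i \<in> {1..n}" using Suc.prems by (auto simp: i_def)
  note pos = layer_params_pos[OF i]
  have s: "s \<in> admissible k" "0 < free i (X k s) (Y k s)"
    using Suc.prems by (auto simp: i_def)
  hence IH: "defined_at (fst (FP k)) s" "defined_at (snd (FP k)) s"
    "reval (fst (FP k)) s = X k s" "reval (snd (FP k)) s = Y k s" using Suc by auto
  have "layer_profile (admissible k) (X k) (Y k)" using admissible_profile Suc.prems by simp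
  hence "0 \<le> X k s" using layer_profile_nonneg(2) s(1) by blast
  hence E: "0 < 1 + dl i * X k s" using pos(1) by (simp add: add_pos_nonneg)
  let ?D = "dfun (Sb i) (Fb i) (dl i) (gm i) (fst (FP k)) (snd (FP k))"
  have D: "defined_at ?D s" "reval ?D s = (1 + dl i * X k s) * free i (X k s) (Y k s)"
    using eval_dfun[OF IH(1,2)] IH(3,4) E by auto
  have "reval ?D s \<noteq> 0" using D(2) E s(2) by simp
  hence "defined_at (fst (FP (Suc k))) s \<and>
      reval (fst (FP (Suc k))) s = lm i * Fb i * X k s / reval ?D s"
    using eval_divide[OF _ D(1), of "rconst (lm i) * rconst (Fb i) * fst (FP k)"] IH
    by (simp add: i_def Let_def split_beta)
  moreover have "lm i * Fb i * X k s / reval ?D s = X (Suc k) s"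
    using D(2) E s(2) by (simp add: X_Suc i_def[symmetric] sat_def)
  moreover have "defined_at (snd (FP (Suc k))) s \<and> reval (snd (FP (Suc k))) s = Y (Suc k) s"
    using eval_gYfun[OF IH(1)] IH(3) E by (simp add: Y_Suc i_def Let_def split_beta)
  ultimately show ?case by simp
qed

lemma BMSS_layer:
  assumes "BMSS n a0 b0 c0 a1 b1 c1 Fb Sb Eb S0 S1 F Y0 Y1" "i \<in> {1..n}"
  shows "Y0 i = gm i * F i * S1 i" "Y1 i = dl i * F i * S1 i"
    "lm i * F i * S1 i = S0 i * S1 (i - 1)" "Fb i = F i + Y1 i"
    "Sb i = S0 i + S1 i + Y0 i + Y1 i + (if i < n then Y0 (Suc i) else 0)"
    "0 \<le> S0 i" "0 \<le> S1 i"
  using assms by (auto simp: BMSS_def steady_state_def)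

text \<open>If S_i^1 = X (n-i) s and Y_{i+1}^0 = Y (n-i) s, the layer
  equations express F_i and S_i^0 in closed form, so S_{i-1}^1 and Y_i^0 are the next values of
  the recursion. The free substrate S_i^0 is positive: if it vanished, then S_i^1 = 0, forcing
  s = 0 and hence S_i^0 = Sb_i > 0.\<close>
lemma BMSS_upstream_step:
  assumes B: "BMSS n a0 b0 c0 a1 b1 c1 Fb Sb Eb S0 S1 F Y0 Y1" and i: "i \<in> {1..n}"
    and s: "s \<in> admissible (n - i)" and x: "S1 i = X (n - i) s"
    and y: "Y (n - i) s = (if i < n then Y0 (Suc i) else 0)"
  shows "s \<in> admissible (Suc (n - i))" "S1 (i - 1) = X (Suc (n - i)) s"
    "Y (Suc (n - i)) s = Y0 i"
proof -
  note pos = layer_params_pos[OF i] and L = BMSS_layer[OF B i]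
  have ni: "n - (n - i) = i" using i by auto
  have prof: "layer_profile (admissible (n - i)) (X (n - i)) (Y (n - i))"
    using admissible_profile by simp
  have x0: "0 \<le> X (n - i) s" using L(7) x by simp
  have "Sb i = S0 i + X (n - i) s + Y0 i + Y1 i + Y (n - i) s" using L(5) x y by simp
  note closed = layer_closed_form[OF pos(1) x0 L(1,2,4)[unfolded x] this]
  have "0 < F i" using closed(1) pos x0 by (simp add: add_pos_nonneg)
  have "0 < S0 i"
  proof (rule ccontr)
    assume "\<not> 0 < S0 i"
    hence "S0 i = 0" using L(6) by simp
    hence "X (n - i) s = 0" using L(3) x \<open>0 < F i\<close> pos(3) by simp
    hence "s = 0" using increasing_response_nonneg(2) prof s by (auto simp: layer_profile_def)
    hence "S0 i = Sb i" using closed(3) prof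
      by (simp add: layer_profile_def increasing_response_def free_substrate_def)
    thus False using \<open>S0 i = 0\<close> pos(5) by simp
  qed
  thus "s \<in> admissible (Suc (n - i))" using s closed(3) by (simp add: ni)
  have "S1 (i - 1) = lm i * (F i * X (n - i) s) / S0 i"
    using L(3) x \<open>0 < S0 i\<close> by (simp add: field_simps)
  thus "S1 (i - 1) = X (Suc (n - i)) s" using closed(2,3) by (simp add: X_Suc ni mult.assoc)
  show "Y (Suc (n - i)) s = Y0 i" using L(1) closed(2) x by (simp add: Y_Suc ni mult.assoc)
qed

lemma BMSS_determined:
  assumes B: "BMSS n a0 b0 c0 a1 b1 c1 Fb Sb Eb S0 S1 F Y0 Y1"
  shows "S1 n \<in> admissible n" "Eb = X n (S1 n) + Y n (S1 n)"
proof -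
  define s where "s = S1 n"
  have "s \<in> admissible k \<and> S1 (n - k) = X k s \<and>
      Y k s = (if n - k < n then Y0 (Suc (n - k)) else 0)" if "k \<le> n" for k
    using that
  proof (induction k)
    case 0 thus ?case using BMSS_layer(7)[OF B, of n] n1 by (simp add: s_def X_0 Y_0)
  next
    case (Suc k)
    hence i: "n - k \<in> {1..n}" and k: "n - (n - k) = k" "Suc (n - Suc k) = n - k" "n - Suc k < n"
      using n1 by auto
    note step = BMSS_upstream_step[OF B i, unfolded k(1)]
    show ?case using step Suc k(2,3) by simp
  qed
  from this[of n] n1 have "s \<in> admissible n" "S1 0 = X n s" "Y n s = Y0 1" by auto
  moreover have "Eb = S1 0 + Y0 1" using B by (simp add: BMSS_def steady_state_def)
  ultimately show "S1 n \<in> admissible n" "Eb = X n (S1 n) + Y n (S1 n)" by (simp_all add: s_def)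
qed

text \<open>Conversely, for admissible s the layer values read off the recursion form a steady state:
  S_j^1 = X (n-j) s, with F_j, Y_j^0, Y_j^1 and S_j^0 given by the conservation laws.\<close>
definition S1_of :: "real \<Rightarrow> nat \<Rightarrow> real" where "S1_of s j = X (n - j) s"
definition F_of :: "real \<Rightarrow> nat \<Rightarrow> real" where "F_of s j = Fb j / (1 + dl j * S1_of s j)"
definition Y0_of :: "real \<Rightarrow> nat \<Rightarrow> real" where "Y0_of s j = gm j * F_of s j * S1_of s j"
definition Y1_of :: "real \<Rightarrow> nat \<Rightarrow> real" where "Y1_of s j = dl j * F_of s j * S1_of s j"
definition S0_of :: "real \<Rightarrow> nat \<Rightarrow> real" where
  "S0_of s j = Sb j - S1_of s j - Y0_of s j - Y1_of s j - (if j < n then Y0_of s (Suc j) else 0)"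

lemma Y0_of_upstream: "j \<in> {1..n} \<Longrightarrow> Y0_of s j = Y (Suc (n - j)) s"
  by (simp add: Y0_of_def F_of_def S1_of_def Y_Suc sat_def Suc_diff_le)

lemma layer_of:
  assumes i: "i \<in> {1..n}" and s: "s \<in> admissible n"
  shows "lm i * F_of s i * S1_of s i = S0_of s i * S1_of s (i - 1)"
    "Fb i = F_of s i + Y1_of s i"
    "0 \<le> S0_of s i" "0 \<le> S1_of s i" "0 \<le> F_of s i" "0 \<le> Y0_of s i" "0 \<le> Y1_of s i"
proof -
  define k where "k = n - i"
  have k: "k < n" "n - k = i" "n - (i - 1) = Suc k" using i by (auto simp: k_def)
  note pos = layer_params_pos[OF i]
  have sk: "s \<in> admissible (Suc k)" using admissible_antimono[of "Suc k" n] k(1) s by auto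
  have x: "S1_of s i = X k s" by (simp add: S1_of_def k_def)
  have x0: "0 \<le> X k s" using layer_profile_nonneg(2) admissible_profile[of k] k(1) sk by auto
  have y: "(if i < n then Y0_of s (Suc i) else 0) = Y k s"
    using Y0_of_upstream[of "Suc i"] i by (auto simp: k_def Suc_diff_Suc Y_0)
  have "0 < 1 + dl i * X k s" using pos x0 by (simp add: add_pos_nonneg)
  hence "F_of s i * (1 + dl i * X k s) = Fb i" by (simp add: F_of_def x)
  thus Fb_eq: "Fb i = F_of s i + Y1_of s i" by (simp add: Y1_of_def x algebra_simps)
  have "Sb i = S0_of s i + X k s + Y0_of s i + Y1_of s i + Y k s" by (simp add: S0_of_def x y)
  note closed = layer_closed_form[OF pos(1) x0 Y0_of_def[of s i, unfolded x]
      Y1_of_def[of s i, unfolded x] Fb_eq this]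
  have free_pos: "0 < free i (X k s) (Y k s)" using sk by (simp add: k(2))
  have "S1_of s (i - 1) = lm i * Fb i * sat (dl i) (X k s) / free i (X k s) (Y k s)"
    unfolding S1_of_def k(3) by (simp add: X_Suc k(2))
  thus "lm i * F_of s i * S1_of s i = S0_of s i * S1_of s (i - 1)"
    using closed(2,3) free_pos x by (simp add: field_simps)
  have "0 \<le> F_of s i" using pos x0 by (simp add: F_of_def x)
  thus "0 \<le> S0_of s i" "0 \<le> S1_of s i" "0 \<le> F_of s i" "0 \<le> Y0_of s i" "0 \<le> Y1_of s i"
    using closed(3) free_pos x x0 pos by (simp_all add: Y0_of_def Y1_of_def)
qed

lemma BMSS_exists:
  assumes s: "s \<in> admissible n" and Eb: "Eb = X n s + Y n s" "0 < Eb"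
  shows "BMSS n a0 b0 c0 a1 b1 c1 Fb Sb Eb (S0_of s) (S1_of s) (F_of s) (Y0_of s) (Y1_of s)"
proof -
  have "Eb = S1_of s 0 + Y0_of s 1" using Eb(1) Y0_of_upstream[of 1] n1 by (simp add: S1_of_def)
  moreover have "S1_of s 0 \<ge> 0"
    using layer_profile_nonneg(2) admissible_profile[of n] s by (auto simp: S1_of_def)
  ultimately show ?thesis
    using layer_of[OF _ s] tots Eb(2) by (auto simp: BMSS_def steady_state_def S0_of_def Y0_of_def
        Y1_of_def)
qed

lemma admissible_interval:
  obtains \<sigma> where "0 < \<sigma>" "admissible n = {0..<\<sigma>}"
  using admissible_profile[of n] n1 by auto

lemma f0_eval:
  "s \<in> admissible n \<Longrightarrow>
     defined_at (f0 n a0 b0 c0 a1 b1 c1 Fb Sb) s \<and> reval (f0 n a0 b0 c0 a1 b1 c1 Fb Sb) s = X n s"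
  using upstream_eval[of n s] by (simp add: f0_def)

lemma rfun_eval:
  "s \<in> admissible n \<Longrightarrow> defined_at (rfun n a0 b0 c0 a1 b1 c1 Fb Sb) s \<and>
     reval (rfun n a0 b0 c0 a1 b1 c1 Fb Sb) s = X n s + Y n s"
  using upstream_eval[of n s] eval_add by (simp add: rfun_def)

lemma f0_response: "increasing_response (admissible n) (reval (f0 n a0 b0 c0 a1 b1 c1 Fb Sb))"
proof (rule increasing_response_cong)
  have "layer_profile (admissible n) (X n) (Y n)" using admissible_profile by simp
  thus "0 \<in> admissible n" "increasing_response (admissible n) (X n)"
    by (simp_all add: layer_profile_def initial_segment_def)
qed (use f0_eval in auto)

lemma rfun_response: "increasing_response (admissible n) (reval (rfun n a0 b0 c0 a1 b1 c1 Fb Sb))"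
proof (rule increasing_response_cong)
  have "layer_profile (admissible n) (X n) (Y n)" using admissible_profile by simp
  thus "0 \<in> admissible n" "increasing_response (admissible n) (\<lambda>s. X n s + Y n s)"
    by (simp_all add: layer_profile_def initial_segment_def layer_profile_total_response)
qed (use rfun_eval in auto)

lemma stimulus_response:
  assumes \<sigma>: "admissible n = {0..<\<sigma>}"
  shows "\<forall>Eb::real. Eb > 0 \<longrightarrow>
    (\<exists>s. 0 \<le> s \<and> s < \<sigma> \<and> reval (rfun n a0 b0 c0 a1 b1 c1 Fb Sb) s = Eb \<and>
      (\<forall>t. 0 \<le> t \<and> t < \<sigma> \<and> reval (rfun n a0 b0 c0 a1 b1 c1 Fb Sb) t = Eb \<longrightarrow> t = s) \<and>
      (\<exists>S0 S1 F Y0 Y1. BMSS n a0 b0 c0 a1 b1 c1 Fb Sb Eb S0 S1 F Y0 Y1) \<and>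
      (\<forall>S0 S1 F Y0 Y1. BMSS n a0 b0 c0 a1 b1 c1 Fb Sb Eb S0 S1 F Y0 Y1 \<longrightarrow> S1 n = s))"
proof (intro allI impI)
  fix Eb :: real assume Eb: "Eb > 0"
  let ?r = "reval (rfun n a0 b0 c0 a1 b1 c1 Fb Sb)"
  have r: "increasing_response {0..<\<sigma>} ?r" using rfun_response \<sigma> by simp
  obtain s where s: "0 \<le> s \<and> s < \<sigma> \<and> ?r s = Eb \<and> (\<forall>t. 0 \<le> t \<and> t < \<sigma> \<and> ?r t = Eb \<longrightarrow> t = s)"
    using increasing_response_inverse[OF r Eb] by (elim exE)
  hence "s \<in> admissible n" using \<sigma> by simp
  hence "\<exists>S0 S1 F Y0 Y1. BMSS n a0 b0 c0 a1 b1 c1 Fb Sb Eb S0 S1 F Y0 Y1"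
    using BMSS_exists[OF _ _ Eb] rfun_eval s by fastforce
  moreover have "S1 n = s" if "BMSS n a0 b0 c0 a1 b1 c1 Fb Sb Eb S0 S1 F Y0 Y1" for S0 S1 F Y0 Y1
    using BMSS_determined[OF that] rfun_eval[of "S1 n"] s \<sigma> by simp
  ultimately show "\<exists>s. 0 \<le> s \<and> s < \<sigma> \<and> ?r s = Eb \<and> (\<forall>t. 0 \<le> t \<and> t < \<sigma> \<and> ?r t = Eb \<longrightarrow> t = s) \<and>
      (\<exists>S0 S1 F Y0 Y1. BMSS n a0 b0 c0 a1 b1 c1 Fb Sb Eb S0 S1 F Y0 Y1) \<and>
      (\<forall>S0 S1 F Y0 Y1. BMSS n a0 b0 c0 a1 b1 c1 Fb Sb Eb S0 S1 F Y0 Y1 \<longrightarrow> S1 n = s)"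
    using s by blast
qed

end

theorem mainTheorem9:
  fixes n :: nat and a0 b0 c0 a1 b1 c1 Fb Sb :: "nat \<Rightarrow> real"
  assumes "n \<ge> 1"
    and "\<forall>i\<in>{1..n}. a0 i > 0 \<and> b0 i > 0 \<and> c0 i > 0 \<and> a1 i > 0 \<and> b1 i > 0 \<and> c1 i > 0"
    and "\<forall>i\<in>{1..n}. Fb i > 0 \<and> Sb i > 0"
  shows "\<exists>\<sigma>.
     smallest_pos_zero (rden (rfun n a0 b0 c0 a1 b1 c1 Fb Sb)) \<sigma> \<and>
     smallest_pos_zero (rden (f0 n a0 b0 c0 a1 b1 c1 Fb Sb)) \<sigma> \<and>
     continuous_on {0..<\<sigma>} (reval (rfun n a0 b0 c0 a1 b1 c1 Fb Sb)) \<and>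
     strict_mono_on {0..<\<sigma>} (reval (rfun n a0 b0 c0 a1 b1 c1 Fb Sb)) \<and>
     reval (rfun n a0 b0 c0 a1 b1 c1 Fb Sb) 0 = 0 \<and>
     filterlim (reval (rfun n a0 b0 c0 a1 b1 c1 Fb Sb)) at_top (at_left \<sigma>) \<and>
     (\<forall>Eb::real. Eb > 0 \<longrightarrow>
        (\<exists>s. 0 \<le> s \<and> s < \<sigma> \<and> reval (rfun n a0 b0 c0 a1 b1 c1 Fb Sb) s = Eb \<and>
             (\<forall>t. 0 \<le> t \<and> t < \<sigma> \<and> reval (rfun n a0 b0 c0 a1 b1 c1 Fb Sb) t = Eb \<longrightarrow> t = s) \<and>
             (\<exists>S0 S1 F Y0 Y1. BMSS n a0 b0 c0 a1 b1 c1 Fb Sb Eb S0 S1 F Y0 Y1) \<and>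
             (\<forall>S0 S1 F Y0 Y1. BMSS n a0 b0 c0 a1 b1 c1 Fb Sb Eb S0 S1 F Y0 Y1 \<longrightarrow> S1 n = s)))"
proof -
  interpret cascade n a0 b0 c0 a1 b1 c1 Fb Sb using assms by unfold_locales
  obtain \<sigma> where \<sigma>: "0 < \<sigma>" "admissible n = {0..<\<sigma>}" by (rule admissible_interval)
  let ?r = "reval (rfun n a0 b0 c0 a1 b1 c1 Fb Sb)"
  have r: "increasing_response {0..<\<sigma>} ?r"
    and f: "increasing_response {0..<\<sigma>} (reval (f0 n a0 b0 c0 a1 b1 c1 Fb Sb))"
    using rfun_response f0_response \<sigma>(2) by simp_all
  have r_props: "continuous_on {0..<\<sigma>} ?r" "strict_mono_on {0..<\<sigma>} ?r" "?r 0 = 0"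
    using r by (simp_all add: increasing_response_def)
  have pole_r: "smallest_pos_zero (rden (rfun n a0 b0 c0 a1 b1 c1 Fb Sb)) \<sigma>"
    using rfun_eval \<sigma> by (intro smallest_pos_zero_rden increasing_response_tendsto[OF \<sigma>(1) r]) auto
  have pole_f: "smallest_pos_zero (rden (f0 n a0 b0 c0 a1 b1 c1 Fb Sb)) \<sigma>"
    using f0_eval \<sigma> by (intro smallest_pos_zero_rden increasing_response_tendsto[OF \<sigma>(1) f]) auto
  show ?thesis
    by (intro exI[of _ \<sigma>] conjI pole_r pole_f r_props stimulus_response[OF \<sigma>(2)]
        increasing_response_tendsto[OF \<sigma>(1) r])
qed

end
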